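(* Let $L\ge0$ and, for $n\ge1$, let $\mathbb H_n$ be maps from $\mathbb X$ to subsets of $\mathbb R^N$, each $L$-separable (with the same $L$). If $\mathbb H(\theta)=\mathrm{cl}\big(\bigcup_{n\ge1}\mathbb H_n(\theta)\big)$ for all $\theta\in\mathbb X$, then $\mathbb H$ is $L$-separable.
   Context: $\mathbb X:=[0,T]\times\mathbb R^d\times\mathbb R^{dN}$ with elements $\theta=(t,x,z)$. A set-valued map $\mathbb G$ from $\mathbb X$ to subsets of $\mathbb R^N$ is called $L$-separable if there exist functions $H^n:\mathbb X\to\mathbb R^N$, $n\ge1$, such that $\mathbb G(\theta)=\mathrm{cl}\{H^n(\theta):n\ge1\}$ for each $\theta\in\mathbb X$, and each $H^n$ is measurable in $(t,x)$ and uniformly Lipschitz continuous in $z$ with common Lipschitz constant $L$. *)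

theory Defs
  imports "HOL-Analysis.Analysis"
begin

text \<open>The state space X = [0,T] x R^d x R^(dN); an element theta = (t,x,z).
  z in R^(dN) is represented as a d x N real matrix (real^'d^'N).
  Set-valued maps are curried functions; only their values on X matter.\<close>

definition XX :: "real \<Rightarrow> (real \<times> (real^'d) \<times> (real^'d^'N)) set" where
  "XX T = {0..T} \<times> UNIV \<times> UNIV"

definition L_separable ::
  "real \<Rightarrow> real \<Rightarrow> (real \<times> (real^'d) \<times> (real^'d^'N) \<Rightarrow> (real^'N) set) \<Rightarrow> bool" where
  "L_separable T L G \<longleftrightarrow>
     (\<exists>H :: nat \<Rightarrow> real \<times> (real^'d) \<times> (real^'d^'N) \<Rightarrow> real^'N.
        (\<forall>\<theta>\<in>XX T. G \<theta> = closure (range (\<lambda>n. H n \<theta>))) \<and>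
        (\<forall>n z. (\<lambda>(t,x). H n (t,x,z)) \<in> borel_measurable (restrict_space borel ({0..T} \<times> UNIV))) \<and>
        (\<forall>n. \<forall>t\<in>{0..T}. \<forall>x. L-lipschitz_on UNIV (\<lambda>z. H n (t,x,z))))"

end

theory Submission
  imports Defs
begin

text \<open>Pick an L-Lipschitz, measurable enumeration \<open>H n k\<close> for each \<open>HH n\<close> and merge these
  countably many sequences into one through the Cantor pairing \<open>prod_decode\<close>. Its range is
  the union of the ranges of the \<open>H n\<close>, whose closure equals the closure of the union of the
  sets \<open>HH n \<theta>\<close> because closing each member of a union first does not change its closure.\<close>

lemma closure_UN_closure: "closure (\<Union>i\<in>I. closure (A i)) = closure (\<Union>i\<in>I. A i)"
proof (rule antisym)
  have "(\<Union>i\<in>I. closure (A i)) \<subseteq> closure (\<Union>i\<in>I. A i)"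
    by (intro UN_least closure_mono UN_upper)
  then show "closure (\<Union>i\<in>I. closure (A i)) \<subseteq> closure (\<Union>i\<in>I. A i)"
    by (rule closure_minimal[OF _ closed_closure])
  show "closure (\<Union>i\<in>I. A i) \<subseteq> closure (\<Union>i\<in>I. closure (A i))"
    by (intro closure_mono UN_mono order_refl closure_subset)
qed

lemma range_prod_decode_Suc:
  "range (\<lambda>m. F (Suc (fst (prod_decode m))) (snd (prod_decode m))) = (\<Union>n\<in>{1..}. range (F n))"
proof -
  have "range (\<lambda>m. F (Suc (fst (prod_decode m))) (snd (prod_decode m)))
      = (\<lambda>(a, k). F (Suc a) k) ` range prod_decode"
    by (simp add: image_image case_prod_beta)
  also have "\<dots> = (\<Union>a. range (F (Suc a)))"
    by (auto simp: surj_prod_decode)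
  also have "\<dots> = (\<Union>n\<in>{1..}. range (F n))"
    by (auto simp: image_iff) (metis Suc_pred' less_eq_Suc_le)
  finally show ?thesis .
qed

lemma L_separable_closure_UN_ranges:
  fixes H :: "nat \<Rightarrow> nat \<Rightarrow> real \<times> (real^'d) \<times> (real^'d^'N) \<Rightarrow> real^'N"
  assumes closure_eq: "\<And>\<theta>. \<theta> \<in> XX T \<Longrightarrow> G \<theta> = closure (\<Union>n\<in>{1..}. range (\<lambda>k. H n k \<theta>))"
    and measurable: "\<And>n k z. n \<ge> 1 \<Longrightarrow>
      (\<lambda>(t,x). H n k (t,x,z)) \<in> borel_measurable (restrict_space borel ({0..T} \<times> UNIV))"
    and lipschitz: "\<And>n k t x. n \<ge> 1 \<Longrightarrow> t \<in> {0..T} \<Longrightarrow> L-lipschitz_on UNIV (\<lambda>z. H n k (t,x,z))"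
  shows "L_separable T L G"
  unfolding L_separable_def
proof (intro exI[of _ "\<lambda>m. H (Suc (fst (prod_decode m))) (snd (prod_decode m))"] conjI ballI allI)
  fix \<theta> :: "real \<times> (real^'d) \<times> (real^'d^'N)" assume "\<theta> \<in> XX T"
  then show "G \<theta> = closure (range (\<lambda>m. H (Suc (fst (prod_decode m))) (snd (prod_decode m)) \<theta>))"
    using closure_eq range_prod_decode_Suc[of "\<lambda>n k. H n k \<theta>"] by simp
qed (auto intro: measurable lipschitz)

theorem lemma4p7:
  fixes T L :: real
    and HH :: "nat \<Rightarrow> real \<times> (real^'d) \<times> (real^'d^'N) \<Rightarrow> (real^'N) set"
    and G :: "real \<times> (real^'d) \<times> (real^'d^'N) \<Rightarrow> (real^'N) set"
  assumes "L \<ge> 0"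
    and "\<And>n. n \<ge> 1 \<Longrightarrow> L_separable T L (HH n)"
    and "\<And>\<theta>. \<theta> \<in> XX T \<Longrightarrow> G \<theta> = closure (\<Union>n\<in>{1..}. HH n \<theta>)"
  shows "L_separable T L G"
proof -
  obtain H :: "nat \<Rightarrow> nat \<Rightarrow> real \<times> (real^'d) \<times> (real^'d^'N) \<Rightarrow> real^'N"
    where H: "\<And>n. n \<ge> 1 \<Longrightarrow>
        (\<forall>\<theta>\<in>XX T. HH n \<theta> = closure (range (\<lambda>k. H n k \<theta>))) \<and>
        (\<forall>k z. (\<lambda>(t,x). H n k (t,x,z)) \<in> borel_measurable (restrict_space borel ({0..T} \<times> UNIV))) \<and>
        (\<forall>k. \<forall>t\<in>{0..T}. \<forall>x. L-lipschitz_on UNIV (\<lambda>z. H n k (t,x,z)))"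
    using assms(2) unfolding L_separable_def by metis
  show ?thesis
  proof (rule L_separable_closure_UN_ranges)
    fix \<theta> :: "real \<times> (real^'d) \<times> (real^'d^'N)" assume "\<theta> \<in> XX T"
    then have "(\<Union>n\<in>{1..}. HH n \<theta>) = (\<Union>n\<in>{1..}. closure (range (\<lambda>k. H n k \<theta>)))"
      using H by (intro SUP_cong) auto
    then show "G \<theta> = closure (\<Union>n\<in>{1..}. range (\<lambda>k. H n k \<theta>))"
      using assms(3)[OF \<open>\<theta> \<in> XX T\<close>] closure_UN_closure by metis
  qed (use H in auto)
qed

end
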